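(* Let $M=(S,s_0,\mathbf{P})$ be a DTMC satisfying the standing assumptions below, let $p\in(0,1]$, and let \[\Theta=\{s_0s_1\cdots s_n\in \operatorname{Paths}_{\operatorname{fin}}(M)\mid s_n\in S_p \text{ and } s_i\notin S_p \text{ for all } i<n\}.\] Then $\Theta$ is a $p$-cause for $\lozenge \mathit{error}$ in $M$, $\Theta$ is a regular language (of finite words over the alphabet $S$), and $\Theta\preceq\Pi$ for every $p$-cause $\Pi$ for $\lozenge\mathit{error}$ in $M$.
   Context: A DTMC $M=(S,s_0,\mathbf{P})$ has a finite state set $S$, initial state $s_0\in S$, and transition function $\mathbf{P}\colon S\times S\to[0,1]$ with $\sum_{s'}\mathbf{P}(s,s')=1$ for all $s$. A finite path is a sequence $s_0s_1\cdots s_n$ starting in the initial state with $\mathbf{P}(s_i,s_{i+1})>0$ for all $i$; infinite paths are defined analogously; $\operatorname{Paths}_{\operatorname{fin}}(M)$ and $\operatorname{Paths}(M)$ denote these sets, $\operatorname{Pref}(\pi)$ the set of finite prefixes of a path $\pi$, and $\operatorname{last}(s_0\cdots s_n)=s_n$. The probability measure on infinite paths is the standard one generated by cylinder sets, with $\Pr(\operatorname{Cyl}(s_0\cdots s_n))=\prod_i\mathbf{P}(s_i,s_{i+1})$. $\Pr_s(\lozenge X)$ denotes the probability of eventually reaching the set $X$ when starting in state $s$. Standing assumptions: every state is reached from $s_0$ with positive probability; there are distinguished states $\mathit{error},\mathit{safe}\in S$ such that $\mathit{safe}$ is the (unique) state from which $\mathit{error}$ is not reachable, so $\Pr_{\mathit{safe}}(\lozenge\mathit{error})=0$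 and $\Pr_{s_0}(\lozenge\{\mathit{error},\mathit{safe}\})=1$. For $p\in(0,1]$ let $S_p=\{s\in S\mid \Pr_s(\lozenge\mathit{error})\ge p\}$. A finite path $\hat\pi$ is a $p$-critical prefix if $\Pr_{\operatorname{last}(\hat\pi)}(\lozenge\mathit{error})\ge p$ (this equals the conditional probability of $\lozenge\mathit{error}$ given the cylinder of $\hat\pi$). A set $\Pi$ of finite paths is prefix-free if for each $\hat\pi\in\Pi$ the only prefix of $\hat\pi$ in $\Pi$ is $\hat\pi$ itself. A $p$-cause for $\lozenge\mathit{error}$ in $M$ is a prefix-free set $\Pi\subseteq\operatorname{Paths}_{\operatorname{fin}}(M)$ such that (1) almost every infinite path that visits $\mathit{error}$ has a prefix in $\Pi$, and (2) every element of $\Pi$ is a $p$-critical prefix. For $p$-causes $\Pi,\Phi$ write $\Pi\preceq\Phi$ iff for every $\phi\in\Phi$ there is $\pi\in\Pi$ with $\pi\in\operatorname{Pref}(\phi)$. *)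

theory Defs
  imports "HOL-Probability.Probability" "HOL-Library.Sublist"
begin

text \<open>DTMC with finite state type 's (the state set S is UNIV :: 's set),
  transition function P, initial state s0.  Infinite paths are streams
  (position 0 = starting state), finite paths are nonempty lists.\<close>

definition dtmc_trans :: "('s \<Rightarrow> 's \<Rightarrow> real) \<Rightarrow> bool" where
  "dtmc_trans P \<longleftrightarrow> (\<forall>s s'. 0 \<le> P s s') \<and> (\<forall>s. (\<Sum>s'\<in>UNIV. P s s') = 1)"

fun cyl_prob :: "('s \<Rightarrow> 's \<Rightarrow> real) \<Rightarrow> 's \<Rightarrow> 's list \<Rightarrow> real" where
  "cyl_prob P s [] = 1"
| "cyl_prob P s (x # xs) = P s x * cyl_prob P x xs"

text \<open>Pr s is the probability measure on infinite state sequences starting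
  in s, generated by the cylinder sets (this characterizes it uniquely).\<close>
definition is_path_measure ::
  "('s \<Rightarrow> 's \<Rightarrow> real) \<Rightarrow> ('s \<Rightarrow> 's stream measure) \<Rightarrow> bool" where
  "is_path_measure P Pr \<longleftrightarrow> (\<forall>s.
      prob_space (Pr s) \<and>
      sets (Pr s) = sets (stream_space (count_space UNIV)) \<and>
      (\<forall>xs. measure (Pr s) {\<omega>. stake (Suc (length xs)) \<omega> = s # xs} = cyl_prob P s xs))"

definition reach_prob :: "('s \<Rightarrow> 's stream measure) \<Rightarrow> 's \<Rightarrow> 's set \<Rightarrow> real" where
  "reach_prob Pr s X = measure (Pr s) {\<omega> \<in> space (Pr s). \<exists>i. \<omega> !! i \<in> X}"

definition fin_path :: "('s \<Rightarrow> 's \<Rightarrow> real) \<Rightarrow> 's \<Rightarrow> 's list \<Rightarrow> bool" where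
  "fin_path P s0 xs \<longleftrightarrow> xs \<noteq> [] \<and> hd xs = s0 \<and>
      (\<forall>i. Suc i < length xs \<longrightarrow> P (xs ! i) (xs ! Suc i) > 0)"

definition Paths_fin :: "('s \<Rightarrow> 's \<Rightarrow> real) \<Rightarrow> 's \<Rightarrow> 's list set" where
  "Paths_fin P s0 = {xs. fin_path P s0 xs}"

definition standing_assms ::
  "('s \<Rightarrow> 's \<Rightarrow> real) \<Rightarrow> ('s \<Rightarrow> 's stream measure) \<Rightarrow> 's \<Rightarrow> 's \<Rightarrow> 's \<Rightarrow> bool" where
  "standing_assms P Pr s0 error safe \<longleftrightarrow>
      dtmc_trans P \<and> is_path_measure P Pr \<and>
      (\<forall>s. reach_prob Pr s0 {s} > 0) \<and>
      (\<forall>s. reach_prob Pr s {error} = 0 \<longleftrightarrow> s = safe) \<and>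
      reach_prob Pr s0 {error, safe} = 1"

definition S_p :: "('s \<Rightarrow> 's stream measure) \<Rightarrow> 's \<Rightarrow> real \<Rightarrow> 's set" where
  "S_p Pr error p = {s. reach_prob Pr s {error} \<ge> p}"

definition critical_prefix ::
  "('s \<Rightarrow> 's \<Rightarrow> real) \<Rightarrow> ('s \<Rightarrow> 's stream measure) \<Rightarrow> 's \<Rightarrow> 's \<Rightarrow> real \<Rightarrow> 's list \<Rightarrow> bool" where
  "critical_prefix P Pr s0 error p xs \<longleftrightarrow>
      fin_path P s0 xs \<and> reach_prob Pr (last xs) {error} \<ge> p"

definition prefix_free :: "'s list set \<Rightarrow> bool" where
  "prefix_free C \<longleftrightarrow> (\<forall>\<pi>\<in>C. \<forall>\<pi>'\<in>C. prefix \<pi>' \<pi> \<longrightarrow> \<pi>' = \<pi>)"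

definition p_cause ::
  "('s \<Rightarrow> 's \<Rightarrow> real) \<Rightarrow> ('s \<Rightarrow> 's stream measure) \<Rightarrow> 's \<Rightarrow> 's \<Rightarrow> real \<Rightarrow> 's list set \<Rightarrow> bool" where
  "p_cause P Pr s0 error p C \<longleftrightarrow>
      C \<subseteq> Paths_fin P s0 \<and> prefix_free C \<and>
      (AE \<omega> in Pr s0. (\<exists>i. \<omega> !! i = error) \<longrightarrow> (\<exists>n. stake n \<omega> \<in> C)) \<and>
      (\<forall>\<pi>\<in>C. critical_prefix P Pr s0 error p \<pi>)"

definition cause_le :: "'s list set \<Rightarrow> 's list set \<Rightarrow> bool" where
  "cause_le C D \<longleftrightarrow> (\<forall>\<phi>\<in>D. \<exists>\<pi>\<in>C. prefix \<pi> \<phi>)"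

definition regular :: "('a::finite) list set \<Rightarrow> bool" where
  "regular L \<longleftrightarrow> (\<exists>(Q::nat set) q0 \<delta> F. finite Q \<and> q0 \<in> Q \<and>
      (\<forall>q\<in>Q. \<forall>a. \<delta> q a \<in> Q) \<and> F \<subseteq> Q \<and>
      L = {w. fold (\<lambda>a q. \<delta> q a) w q0 \<in> F})"

end

theory Submission
  imports Defs
begin

text \<open>Since error reaches itself with probability 1, error lies in S_p, so every path
  visiting error visits S_p, and cutting it at its first visit to S_p gives an element of
  \<Theta>; as almost every infinite path is a path of the chain, this is condition (1).
  Every element of a p-cause ends in S_p, so cutting it at its first visit to S_p gives a
  prefix in \<Theta>: this is minimality. Finally \<Theta> is a local language: a word belongs to
  it iff it starts with s0, ends in S_p, and each two-letter factor ab satisfies a \<notin> S_p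
  and P(a,b) > 0. Such languages are prefix-free when no final letter may be followed, and
  are recognised by a DFA remembering the last letter read.\<close>

definition local_language :: "'a set \<Rightarrow> ('a \<Rightarrow> 'a \<Rightarrow> bool) \<Rightarrow> 'a set \<Rightarrow> 'a list set" where
  "local_language I R F = {w. w \<noteq> [] \<and> hd w \<in> I \<and> successively R w \<and> last w \<in> F}"

lemma prefix_free_local_language:
  assumes "\<And>a b. R a b \<Longrightarrow> a \<notin> F"
  shows "prefix_free (local_language I R F)"
  unfolding prefix_free_def
proof (intro ballI impI)
  fix w v assume w: "w \<in> local_language I R F" and v: "v \<in> local_language I R F" and "prefix v w"
  then obtain u where u: "w = v @ u" by (auto simp: prefix_def)
  show "v = w"
  proof (rule ccontr)
    assume "v \<noteq> w"
    then have "R (last v) (hd u)"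
      using w v u by (auto simp: local_language_def successively_append_iff)
    then show False using v assms by (auto simp: local_language_def)
  qed
qed

lemma successively_first_hit_prefix:
  assumes "successively R w" "x \<in> set w" "x \<in> F"
  shows "\<exists>v. prefix v w \<and> v \<noteq> [] \<and> hd v = hd w \<and>
           successively (\<lambda>a b. a \<notin> F \<and> R a b) v \<and> last v \<in> F"
  using assms
proof (induction w)
  case Nil then show ?case by simp
next
  case (Cons y w)
  show ?case
  proof (cases "y \<in> F")
    case True
    then show ?thesis by (intro exI[of _ "[y]"]) simp
  next
    case False
    with Cons.prems have "w \<noteq> []" "successively R w" "R y (hd w)" "x \<in> set w"
      by (auto simp: successively_Cons)
    moreover obtain v where "prefix v w" "v \<noteq> []" "hd v = hd w"
      "successively (\<lambda>a b. a \<notin> F \<and> R a b) v" "last v \<in> F"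
      using Cons.IH Cons.prems calculation by blast
    ultimately show ?thesis using False
      by (intro exI[of _ "y # v"]) (simp add: successively_Cons)
  qed
qed

lemma local_language_first_hit_prefix:
  assumes "hd w \<in> I" "successively R w" "x \<in> set w" "x \<in> F"
  shows "\<exists>v \<in> local_language I (\<lambda>a b. a \<notin> F \<and> R a b) F. prefix v w"
  using successively_first_hit_prefix[OF assms(2-4)] assms(1) by (auto simp: local_language_def)

text \<open>State 0 is initial, 1 is a rejecting sink, and 2 + to_nat a records that
  the word read so far is a valid prefix ending with a.\<close>
definition local_dfa_step :: "'a::countable set \<Rightarrow> ('a \<Rightarrow> 'a \<Rightarrow> bool) \<Rightarrow> nat \<Rightarrow> 'a \<Rightarrow> nat" where
  "local_dfa_step I R q a =
     (if q = 0 \<and> a \<in> I \<or> 2 \<le> q \<and> R (from_nat (q - 2)) a then to_nat a + 2 else 1)"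

lemma fold_local_dfa_step:
  "fold (\<lambda>a q. local_dfa_step I R q a) w 0 =
     (if w = [] then 0 else if hd w \<in> I \<and> successively R w then to_nat (last w) + 2 else 1)"
  by (induction w rule: rev_induct) (auto simp: local_dfa_step_def successively_append_iff)

lemma regular_local_language: "regular (local_language I R (F :: 'a::finite set))"
proof -
  let ?code = "\<lambda>a::'a. to_nat a + 2"
  let ?Q = "{0, 1} \<union> range ?code"
  have "local_language I R F = {w. fold (\<lambda>a q. local_dfa_step I R q a) w 0 \<in> ?code ` F}"
    by (auto simp: local_language_def fold_local_dfa_step)
  moreover have "finite ?Q" "0 \<in> ?Q" "?code ` F \<subseteq> ?Q"
    by auto
  moreover have "\<forall>q\<in>?Q. \<forall>a. local_dfa_step I R q a \<in> ?Q"
    by (simp add: local_dfa_step_def)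
  ultimately show ?thesis
    unfolding regular_def by blast
qed

lemma fin_path_iff_successively:
  "fin_path P s xs \<longleftrightarrow> xs \<noteq> [] \<and> hd xs = s \<and> successively (\<lambda>a b. 0 < P a b) xs"
  by (auto simp: fin_path_def successively_conv_nth)

lemma successively_if_cyl_prob_nonzero:
  "cyl_prob P s xs \<noteq> 0 \<Longrightarrow> successively (\<lambda>a b. P a b \<noteq> 0) (s # xs)"
  by (induction xs arbitrary: s) (auto simp: successively_Cons)

lemma prefix_stake: "prefix v (stake n \<omega>) \<Longrightarrow> v = stake (length v) \<omega>"
  by (metis length_stake prefixE take_stake append_eq_conv_conj)

definition first_entry_paths :: "('s \<Rightarrow> 's \<Rightarrow> real) \<Rightarrow> 's \<Rightarrow> 's set \<Rightarrow> 's list set" where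
  "first_entry_paths P s0 X = local_language {s0} (\<lambda>a b. a \<notin> X \<and> 0 < P a b) X"

lemma first_entry_paths_eq:
  "first_entry_paths P s0 X =
     {xs \<in> Paths_fin P s0. last xs \<in> X \<and> (\<forall>i < length xs - 1. xs ! i \<notin> X)}"
  by (auto simp: first_entry_paths_def Paths_fin_def local_language_def
      fin_path_iff_successively successively_conv_nth)

lemma first_entry_paths_prefix:
  assumes "fin_path P s0 \<phi>" "x \<in> set \<phi>" "x \<in> X"
  shows "\<exists>\<pi> \<in> first_entry_paths P s0 X. prefix \<pi> \<phi>"
  using local_language_first_hit_prefix[of \<phi> "{s0}" "\<lambda>a b. 0 < P a b" x X] assms
  unfolding first_entry_paths_def by (auto simp: fin_path_iff_successively)

context
  fixes P :: "'s::countable \<Rightarrow> 's \<Rightarrow> real" and Pr :: "'s \<Rightarrow> 's stream measure"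
  assumes path_measure: "is_path_measure P Pr"
begin

lemma prob_space_path_measure: "prob_space (Pr s)"
  using path_measure by (simp add: is_path_measure_def)

lemma sets_path_measure: "sets (Pr s) = sets (stream_space (count_space UNIV))"
  using path_measure by (simp add: is_path_measure_def)

lemma measure_cylinder: "measure (Pr s) {\<omega>. stake (Suc (length xs)) \<omega> = s # xs} = cyl_prob P s xs"
  using path_measure by (simp add: is_path_measure_def)

lemma space_path_measure: "space (Pr s) = UNIV"
  using sets_eq_imp_space_eq[OF sets_path_measure] by (simp add: space_stream_space)

lemma cylinder_in_sets: "{\<omega>. stake n \<omega> = xs} \<in> sets (Pr s)"
proof -
  have "Measurable.pred (stream_space (count_space UNIV)) (\<lambda>\<omega>::'s stream. stake n \<omega> = xs)"
    by measurable
  then show ?thesis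
    by (simp add: pred_def sets_path_measure space_stream_space)
qed

lemma path_measure_trans_nonneg: "0 \<le> P s t"
  by (metis measure_cylinder cyl_prob.simps mult.right_neutral measure_nonneg)

lemma AE_shd: "AE \<omega> in Pr s. shd \<omega> = s"
proof -
  have "AE \<omega> in Pr s. \<omega> \<in> {\<omega>. stake (Suc 0) \<omega> = [s]}"
    by (rule prob_space.AE_prob_1[OF prob_space_path_measure])
      (use measure_cylinder[of s "[]"] in simp)
  then show ?thesis by simp
qed

lemma AE_fin_path_stake: "AE \<omega> in Pr s. \<forall>n. fin_path P s (stake (Suc n) \<omega>)"
proof -
  have "AE \<omega> in Pr s. \<forall>xs. cyl_prob P s xs = 0 \<longrightarrow> stake (Suc (length xs)) \<omega> \<noteq> s # xs"
    unfolding AE_all_countable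
  proof
    fix xs
    show "AE \<omega> in Pr s. cyl_prob P s xs = 0 \<longrightarrow> stake (Suc (length xs)) \<omega> \<noteq> s # xs"
      using prob_space.prob_eq_0[OF prob_space_path_measure cylinder_in_sets]
        measure_cylinder[of s xs] by (auto simp del: stake.simps)
  qed
  with AE_shd show ?thesis
  proof eventually_elim
    case (elim \<omega>)
    show ?case
    proof
      fix n
      have stake_eq: "stake (Suc n) \<omega> = s # stake n (stl \<omega>)"
        using elim by simp
      with elim have "successively (\<lambda>a b. P a b \<noteq> 0) (stake (Suc n) \<omega>)"
        by (metis length_stake successively_if_cyl_prob_nonzero)
      then have "successively (\<lambda>a b. 0 < P a b) (stake (Suc n) \<omega>)"
        by (rule successively_mono) (simp add: less_le path_measure_trans_nonneg)
      then show "fin_path P s (stake (Suc n) \<omega>)"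
        using stake_eq by (simp add: fin_path_iff_successively)
    qed
  qed
qed

lemma reach_prob_self: "reach_prob Pr s {s} = 1"
proof -
  have "Measurable.pred (stream_space (count_space UNIV)) (\<lambda>\<omega>::'s stream. \<exists>i. \<omega> !! i \<in> {s})"
    by measurable
  then have "{\<omega> \<in> space (Pr s). \<exists>i. \<omega> !! i \<in> {s}} \<in> sets (Pr s)"
    by (simp add: pred_def sets_path_measure space_path_measure space_stream_space)
  moreover have "AE \<omega> in Pr s. \<exists>i. \<omega> !! i \<in> {s}"
    using AE_shd by eventually_elim (metis singletonI snth.simps(1))
  ultimately show ?thesis
    unfolding reach_prob_def by (simp add: prob_space.prob_Collect_eq_1[OF prob_space_path_measure])
qed

lemma AE_first_entry_stake:
  "AE \<omega> in Pr s. (\<exists>i. \<omega> !! i \<in> X) \<longrightarrow> (\<exists>n. stake n \<omega> \<in> first_entry_paths P s X)"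
  using AE_fin_path_stake
proof eventually_elim
  case (elim \<omega>)
  show ?case
  proof
    assume "\<exists>i. \<omega> !! i \<in> X"
    then obtain i where "\<omega> !! i \<in> X" by blast
    moreover have "\<omega> !! i \<in> set (stake (Suc i) \<omega>)"
      by (metis lessI length_stake nth_mem stake_nth)
    ultimately obtain \<pi> where \<pi>: "\<pi> \<in> first_entry_paths P s X" "prefix \<pi> (stake (Suc i) \<omega>)"
      using first_entry_paths_prefix[OF elim[rule_format, of i]] by blast
    then have "stake (length \<pi>) \<omega> \<in> first_entry_paths P s X"
      using prefix_stake[OF \<pi>(2)] by simp
    then show "\<exists>n. stake n \<omega> \<in> first_entry_paths P s X" ..
  qed
qed

end

theorem proposition1:
  fixes P :: "'s::finite \<Rightarrow> 's \<Rightarrow> real"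
    and Pr :: "'s \<Rightarrow> 's stream measure"
    and s0 error safe :: 's and p :: real
  assumes "standing_assms P Pr s0 error safe"
    and "0 < p" and "p \<le> 1"
  defines "\<Theta> \<equiv> {xs \<in> Paths_fin P s0. last xs \<in> S_p Pr error p \<and>
                    (\<forall>i < length xs - 1. xs ! i \<notin> S_p Pr error p)}"
  shows "p_cause P Pr s0 error p \<Theta> \<and> regular \<Theta> \<and>
         (\<forall>C. p_cause P Pr s0 error p C \<longrightarrow> cause_le \<Theta> C)"
proof -
  let ?X = "S_p Pr error p"
  have path_measure: "is_path_measure P Pr"
    using assms(1) by (simp add: standing_assms_def)
  have \<Theta>_eq: "\<Theta> = first_entry_paths P s0 ?X"
    unfolding \<Theta>_def first_entry_paths_eq ..
  have error_in_X: "error \<in> ?X"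
    using reach_prob_self[OF path_measure] \<open>p \<le> 1\<close> by (simp add: S_p_def)
  have "AE \<omega> in Pr s0. (\<exists>i. \<omega> !! i = error) \<longrightarrow> (\<exists>n. stake n \<omega> \<in> \<Theta>)"
    using AE_first_entry_stake[OF path_measure, of ?X s0]
    by eventually_elim (use error_in_X \<Theta>_eq in blast)
  moreover have "prefix_free \<Theta>"
    unfolding \<Theta>_eq first_entry_paths_def by (rule prefix_free_local_language) blast
  moreover have "\<forall>\<pi>\<in>\<Theta>. critical_prefix P Pr s0 error p \<pi>"
    by (auto simp: \<Theta>_def critical_prefix_def Paths_fin_def S_p_def)
  moreover have "\<Theta> \<subseteq> Paths_fin P s0"
    by (auto simp: \<Theta>_def)
  ultimately have "p_cause P Pr s0 error p \<Theta>"
    unfolding p_cause_def by blast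
  moreover have "regular \<Theta>"
    unfolding \<Theta>_eq first_entry_paths_def by (rule regular_local_language)
  moreover have "cause_le \<Theta> C" if "p_cause P Pr s0 error p C" for C
    unfolding cause_le_def
  proof
    fix \<phi> assume "\<phi> \<in> C"
    with that have "fin_path P s0 \<phi>" "last \<phi> \<in> ?X"
      by (auto simp: p_cause_def critical_prefix_def S_p_def)
    then show "\<exists>\<pi>\<in>\<Theta>. prefix \<pi> \<phi>"
      unfolding \<Theta>_eq
      by (intro first_entry_paths_prefix[of _ _ _ "last \<phi>"]) (auto simp: fin_path_def)
  qed
  ultimately show ?thesis
    by blast
qed

end
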